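(* Let $n$ be a positive integer and let $z$ be a complex number such that all denominators below are nonzero. Then $$\sum_{k=1}^n\binom{2k}{k}(3k-2n+z)\,\frac{\prod_{j=1}^{k-1}(j-n)(j-n+z)}{\prod_{j=1}^{k}(j^2-z^2)}=\frac{2}{n-z},$$ and $$\sum_{k=n}^{\infty}\frac{3k-2n+z}{k\binom{2k}{k}}\cdot\frac{\prod_{j=1}^{k-1}(j^2-z^2)}{\prod_{j=1,\,j\neq n}^{k}(j-n)(j-n+z)}=1.$$ *)

theory Defs
  imports Complex_Main
begin

end

(* Write b_z(i) = 1/(i! (1-z)_i) for the coefficients of F_z = 0F1(;1-z;x), and theta = x d/dx.
   By Chu-Vandermonde, F_z F_{-z} has coefficients C(2k,k)/((1-z)_k (1+z)_k), and the recurrence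
   i (i-z) b_z(i) = b_z(i-1) makes theta(F_{-z}) F_z - F_{-z} theta(F_z) + z F_{-z} F_z the constant z.
   Multiplying by F_z gives theta(F_z F_{-z}) F_z - 2 F_z F_{-z} theta(F_z) + z F_z F_{-z} F_z = z F_z,
   whose coefficient of x^n is the finite identity multiplied by b_z(n-1).

   The series is summed by induction on n. Its k-th term is a polynomial in k times
   h_z(k) = (1-z)_{k-1} k!/(2k)!, and the difference of the series for n+1 and for n telescopes: up to a
   constant factor, its m-th partial sum is -(m-z) h_z(m) prod_{i=1..n} (m+1-i)(m+1-i+z). For n = 1 the
   partial sums are 1 - (m-z) h_z(m). These remainders tend to 0 because h_z(m) -> 0 by the ratio test,
   and (m-w) h_w(m) = (1-w) h_{w-1}(m) lets a polynomial factor be absorbed by shifting w. *)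

theory Submission
  imports Defs "HOL-Computational_Algebra.Formal_Power_Series" "HOL-Computational_Algebra.Polynomial"
begin

unbundle fps_syntax

section \<open>Pochhammer symbols as products\<close>

lemma prod_diff_eq_pochhammer:
  fixes a :: "'a::comm_ring_1"
  shows "(\<Prod>j=1..m. a - of_nat j) = pochhammer (a - of_nat m) m"
proof (induction m)
  case (Suc m)
  have "pochhammer (a - of_nat (Suc m)) (Suc m) = (a - of_nat (Suc m)) * pochhammer (a - of_nat m) m"
    by (simp add: pochhammer_rec algebra_simps)
  with Suc show ?case by (simp add: mult.commute)
qed simp

lemma prod_sq_diff_eq_pochhammer:
  fixes z :: "'a::comm_ring_1"
  shows "(\<Prod>j=1..k. of_nat j ^ 2 - z ^ 2) = pochhammer (1 - z) k * pochhammer (1 + z) k"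
proof (induction k)
  case (Suc k)
  have "of_nat (Suc k) ^ 2 - z ^ 2 = (1 - z + of_nat k) * (1 + z + of_nat k)"
    by (simp add: power2_eq_square algebra_simps)
  with Suc show ?case by (simp add: pochhammer_Suc mult_ac)
qed simp

lemma prod_pair_eq_pochhammer:
  fixes a z :: "'a::comm_ring_1"
  shows "(\<Prod>j=1..m. (of_nat j - a) * (of_nat j - a + z))
    = pochhammer (a - of_nat m) m * pochhammer (a - z - of_nat m) m"
proof -
  have "(\<Prod>j=1..m. (of_nat j - a) * (of_nat j - a + z)) = (\<Prod>j=1..m. (a - of_nat j) * (a - z - of_nat j))"
    by (intro prod.cong refl) (simp add: algebra_simps)
  also have "\<dots> = (\<Prod>j=1..m. a - of_nat j) * (\<Prod>j=1..m. (a - z) - of_nat j)"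
    by (rule prod.distrib)
  finally show ?thesis
    by (simp only: prod_diff_eq_pochhammer)
qed

lemma prod_pair_eq_fact_pochhammer:
  fixes z :: "'a::{comm_ring_1,ring_char_0}"
  shows "(\<Prod>i=1..t. of_nat i * (of_nat i + z)) = fact t * pochhammer (1 + z) t"
  by (induction t) (simp_all add: pochhammer_Suc algebra_simps)

lemma prod_pair_remove_eq_pochhammer:
  fixes z :: "'a::{comm_ring_1,ring_char_0}"
  assumes "n \<ge> 1" "n \<le> k"
  shows "(\<Prod>j\<in>{1..k}-{n}. (of_nat j - of_nat n) * (of_nat j - of_nat n + z))
    = fact (n - 1) * pochhammer (1 - z) (n - 1) * (fact (k - n) * pochhammer (1 + z) (k - n))"
proof -
  have split: "{1..k} - {n} = {1..n - 1} \<union> {1 + n..(k - n) + n}"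
    using assms by auto
  have shift: "of_nat n - of_nat (n - 1) = (1 :: 'a)" "of_nat n - z - of_nat (n - 1) = 1 - z"
    using assms(1) by (simp_all add: of_nat_diff)
  have "(\<Prod>j=1..n - 1. (of_nat j - of_nat n) * (of_nat j - of_nat n + z))
      = pochhammer 1 (n - 1) * pochhammer (1 - z) (n - 1)"
    unfolding prod_pair_eq_pochhammer shift ..
  moreover have "(\<Prod>j=1 + n..(k - n) + n. (of_nat j - of_nat n) * (of_nat j - of_nat n + z))
      = fact (k - n) * pochhammer (1 + z) (k - n)"
    unfolding prod.shift_bounds_cl_nat_ivl by (simp flip: prod_pair_eq_fact_pochhammer)
  ultimately show ?thesis
    unfolding split by (subst prod.union_disjoint) (auto simp: pochhammer_fact)
qed

lemma pochhammer_self_chu_vandermonde: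
  fixes z :: "'a::idom"
  shows "pochhammer (of_nat k + 1) k = (\<Sum>i\<le>k. of_nat (k choose i)
    * pochhammer (of_nat k + z - of_nat i + 1) i * pochhammer (1 - z + of_nat i) (k - i))"
proof -
  have minus_poch: "pochhammer (- (of_nat k + z) + - (of_nat k - z)) k = (-1) ^ k * pochhammer (of_nat k + 1) k"
  proof -
    have "- (of_nat k + z) + - (of_nat k - z) = - (of_nat (2 * k) :: 'a)"
      by simp
    then show ?thesis
      by (simp add: pochhammer_minus of_nat_diff)
  qed
  have minus_term: "of_nat (k choose i) * pochhammer (- (of_nat k + z)) i * pochhammer (- (of_nat k - z)) (k - i)
     = (-1) ^ k * (of_nat (k choose i) * pochhammer (of_nat k + z - of_nat i + 1) i
                   * pochhammer (1 - z + of_nat i) (k - i))"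
    if "i \<le> k" for i
  proof -
    have plus: "pochhammer (- (of_nat k + z)) i = (-1) ^ i * pochhammer (of_nat k + z - of_nat i + 1) i"
      by (rule pochhammer_minus)
    have "pochhammer (- (of_nat k - z)) (k - i)
        = (-1) ^ (k - i) * pochhammer ((of_nat k - z) - of_nat (k - i) + 1) (k - i)"
      by (rule pochhammer_minus)
    moreover have "(of_nat k - z) - of_nat (k - i) + 1 = 1 - z + of_nat i"
      using that by (simp add: of_nat_diff)
    ultimately have minus: "pochhammer (- (of_nat k - z)) (k - i) = (-1) ^ (k - i) * pochhammer (1 - z + of_nat i) (k - i)"
      by simp
    have sign: "(-1 :: 'a) ^ i * (-1) ^ (k - i) = (-1) ^ k"
      using that by (simp add: power_add[symmetric])
    show ?thesis
      unfolding plus minus sign[symmetric] by (simp only: mult_ac)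
  qed
  have "(-1) ^ k * pochhammer (of_nat k + 1) k = (-1 :: 'a) ^ k * (\<Sum>i\<le>k. of_nat (k choose i)
      * pochhammer (of_nat k + z - of_nat i + 1) i * pochhammer (1 - z + of_nat i) (k - i))"
    unfolding minus_poch[symmetric] pochhammer_binomial_sum[of "- (of_nat k + z)"] sum_distrib_left
    by (intro sum.cong refl minus_term) simp
  then show ?thesis
    by simp
qed

section \<open>The finite sum\<close>

definition fps_theta :: "'a::comm_ring_1 fps \<Rightarrow> 'a fps" where
  "fps_theta f = fps_X * fps_deriv f"

lemma fps_theta_nth [simp]: "fps_theta f $ m = of_nat m * f $ m"
  by (cases m) (simp_all add: fps_theta_def)

lemma fps_theta_mult: "fps_theta (f * g) = fps_theta f * g + f * fps_theta g"
  by (simp add: fps_theta_def algebra_simps)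

lemma fps_theta_combination_nth:
  "(fps_theta f * g - fps_const c * (f * fps_theta g) + fps_const z * (f * g)) $ n
    = (\<Sum>k\<le>n. f $ k * g $ (n - k) * (of_nat k - c * of_nat (n - k) + z))"
proof -
  have "(fps_theta f * g - fps_const c * (f * fps_theta g) + fps_const z * (f * g)) $ n
      = (\<Sum>k\<le>n. of_nat k * f $ k * g $ (n - k)) - c * (\<Sum>k\<le>n. f $ k * (of_nat (n - k) * g $ (n - k)))
        + z * (\<Sum>k\<le>n. f $ k * g $ (n - k))"
    by (simp only: fps_sub_nth fps_add_nth fps_mult_left_const_nth) (simp add: fps_mult_nth atLeast0AtMost)
  also have "\<dots> = (\<Sum>k\<le>n. f $ k * g $ (n - k) * (of_nat k - c * of_nat (n - k) + z))"
    by (simp only: sum_subtractf[symmetric] sum_distrib_left sum.distrib[symmetric]) (simp add: algebra_simps)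
  finally show ?thesis .
qed

definition hyp0F1_coeff :: "'a::field_char_0 \<Rightarrow> nat \<Rightarrow> 'a" where
  "hyp0F1_coeff z i = 1 / (fact i * pochhammer (1 - z) i)"

definition hyp0F1_product_coeff :: "'a::field_char_0 \<Rightarrow> nat \<Rightarrow> 'a" where
  "hyp0F1_product_coeff z k = of_nat ((2 * k) choose k) / (pochhammer (1 - z) k * pochhammer (1 + z) k)"

lemma hyp0F1_coeff_Suc:
  assumes "pochhammer (1 - z) (Suc i) \<noteq> 0"
  shows "hyp0F1_coeff z (Suc i) * (of_nat (Suc i) * (of_nat (Suc i) - z)) = hyp0F1_coeff z i"
proof -
  have poch: "pochhammer (1 - z) (Suc i) = pochhammer (1 - z) i * (of_nat (Suc i) - z)"
    by (simp add: pochhammer_Suc algebra_simps)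
  then have "fact (Suc i) * pochhammer (1 - z) (Suc i)
      = fact i * pochhammer (1 - z) i * (of_nat (Suc i) * (of_nat (Suc i) - z))"
    by (simp only: poch fact_Suc mult_ac)
  moreover have "of_nat (Suc i) - z \<noteq> 0"
    using assms poch by auto
  ultimately show ?thesis
    by (simp add: hyp0F1_coeff_def del: of_nat_Suc)
qed

lemma hyp0F1_coeff_split:
  assumes "i \<le> m" "pochhammer (1 - z) m \<noteq> 0"
  shows "hyp0F1_coeff z m * (pochhammer (of_nat i + 1) (m - i) * pochhammer (of_nat i + 1 - z) (m - i))
    = hyp0F1_coeff z i"
proof -
  have fact_split: "fact m = fact i * pochhammer (of_nat i + 1 :: 'a) (m - i)"
    using pochhammer_product[OF assms(1), of 1] by (simp add: pochhammer_fact add.commute)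
  then have "pochhammer (of_nat i + 1 :: 'a) (m - i) \<noteq> 0"
    by (metis fact_nonzero mult_zero_right)
  moreover note fact_split
  moreover have "pochhammer (1 - z) m = pochhammer (1 - z) i * pochhammer (of_nat i + 1 - z) (m - i)"
    using pochhammer_product[OF assms(1), of "1 - z"] by (simp add: algebra_simps)
  ultimately show ?thesis
    using assms(2) by (simp add: hyp0F1_coeff_def field_simps)
qed

lemma hyp0F1_wronskian_coeff:
  assumes "m \<ge> 1" "pochhammer (1 - z) m \<noteq> 0" "pochhammer (1 + z) m \<noteq> 0"
  shows "(\<Sum>k\<le>m. hyp0F1_coeff (-z) k * hyp0F1_coeff z (m - k) * (of_nat k - of_nat (m - k) + z)) = 0"
proof -
  define v where "v k = of_nat k * (of_nat k + z) * hyp0F1_coeff (-z) k * hyp0F1_coeff z (m - k)" for k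
  define w where "w k = of_nat (m - k) * (of_nat (m - k) - z) * hyp0F1_coeff (-z) k * hyp0F1_coeff z (m - k)" for k
  have w_eq_v: "w k = v (Suc k)" if "k < m" for k
  proof -
    define j where "j = m - Suc k"
    have m_minus_k: "m - k = Suc j"
      using that unfolding j_def by simp
    have "pochhammer (1 - z) (Suc j) \<noteq> 0" "pochhammer (1 - - z) (Suc k) \<noteq> 0"
      using pochhammer_neq_0_mono[OF assms(2), of "Suc j"] pochhammer_neq_0_mono[OF assms(3), of "Suc k"]
        that m_minus_k by simp_all
    note rec = this[THEN hyp0F1_coeff_Suc]
    have "w k = hyp0F1_coeff (-z) k * (hyp0F1_coeff z (Suc j) * (of_nat (Suc j) * (of_nat (Suc j) - z)))"
      unfolding w_def m_minus_k by (simp only: mult_ac)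
    also have "\<dots> = (hyp0F1_coeff (-z) (Suc k) * (of_nat (Suc k) * (of_nat (Suc k) - - z))) * hyp0F1_coeff z j"
      unfolding rec ..
    also have "\<dots> = v (Suc k)"
      unfolding v_def j_def by (simp add: mult_ac)
    finally show ?thesis .
  qed
  have term_eq: "of_nat m * (hyp0F1_coeff (-z) k * hyp0F1_coeff z (m - k) * (of_nat k - of_nat (m - k) + z))
      = v k - w k" if "k \<le> m" for k
  proof -
    have "of_nat (m - k) = (of_nat m - of_nat k :: 'a)"
      using that by (simp add: of_nat_diff)
    then show ?thesis
      unfolding v_def w_def by (simp only:) (simp add: algebra_simps)
  qed
  have "of_nat m * (\<Sum>k\<le>m. hyp0F1_coeff (-z) k * hyp0F1_coeff z (m - k) * (of_nat k - of_nat (m - k) + z))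
      = (\<Sum>k\<le>m. v k - w k)"
    unfolding sum_distrib_left by (intro sum.cong refl term_eq) simp
  also have "\<dots> = (\<Sum>k<m. v k - v (Suc k)) + (v m - w m)"
    using w_eq_v by (simp add: lessThan_Suc_atMost[symmetric])
  also have "\<dots> = 0"
    unfolding sum_lessThan_telescope' by (simp add: v_def w_def)
  finally show ?thesis
    using assms(1) by simp
qed

lemma hyp0F1_coeff_convolution:
  assumes "pochhammer (1 - z) k \<noteq> 0" "pochhammer (1 + z) k \<noteq> 0"
  shows "(\<Sum>i\<le>k. hyp0F1_coeff z i * hyp0F1_coeff (-z) (k - i)) = hyp0F1_product_coeff z k"
proof -
  define N where "N = fact k * pochhammer (1 - z) k * pochhammer (1 + z) k"
  have "N \<noteq> 0"
    using assms unfolding N_def by simp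
  have N_term: "N * (hyp0F1_coeff z i * hyp0F1_coeff (-z) (k - i)) = of_nat (k choose i)
      * pochhammer (of_nat k + z - of_nat i + 1) i * pochhammer (1 - z + of_nat i) (k - i)"
    if "i \<le> k" for i
  proof -
    have split_minus: "pochhammer (1 - z) k = pochhammer (1 - z) i * pochhammer (1 - z + of_nat i) (k - i)"
      using pochhammer_product[OF that, of "1 - z"] by simp
    have "pochhammer (1 + z) k = pochhammer (1 + z) (k - i) * pochhammer (1 + z + of_nat (k - i)) i"
      using pochhammer_product[of "k - i" k "1 + z"] that by simp
    moreover have "1 + z + of_nat (k - i) = of_nat k + z - of_nat i + 1"
      using that by (simp add: of_nat_diff)
    ultimately have split_plus:
      "pochhammer (1 + z) k = pochhammer (1 + z) (k - i) * pochhammer (of_nat k + z - of_nat i + 1) i"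
      by simp
    have "pochhammer (1 - z) i \<noteq> 0" "pochhammer (1 + z) (k - i) \<noteq> 0"
      using pochhammer_neq_0_mono[OF assms(1)] pochhammer_neq_0_mono[OF assms(2)] that by auto
    moreover have "(fact k :: 'a) = of_nat (k choose i) * fact i * fact (k - i)"
      using that by (simp add: binomial_fact)
    ultimately show ?thesis
      unfolding N_def hyp0F1_coeff_def split_minus split_plus by (simp add: field_simps)
  qed
  have "N * (\<Sum>i\<le>k. hyp0F1_coeff z i * hyp0F1_coeff (-z) (k - i)) = pochhammer (of_nat k + 1) k"
    unfolding sum_distrib_left pochhammer_self_chu_vandermonde[of k z]
    by (intro sum.cong refl N_term) simp
  moreover have "N * hyp0F1_product_coeff z k = pochhammer (of_nat k + 1) k"
  proof -
    have "(fact (2 * k) :: 'a) = fact k * pochhammer (of_nat k + 1) k"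
      using pochhammer_product'[of "1::'a" k k] by (simp add: pochhammer_fact mult_2 add.commute)
    moreover have "(of_nat ((2 * k) choose k) :: 'a) = fact (2 * k) / (fact k * fact k)"
      by (simp add: binomial_fact mult_2)
    ultimately show ?thesis
      unfolding N_def hyp0F1_product_coeff_def using assms by (simp add: field_simps)
  qed
  ultimately show ?thesis
    using \<open>N \<noteq> 0\<close> by (metis mult_left_cancel)
qed

lemma hyp0F1_product_identity:
  assumes "pochhammer (1 - z) n \<noteq> 0" "pochhammer (1 + z) n \<noteq> 0"
  shows "(\<Sum>k\<le>n. hyp0F1_product_coeff z k * hyp0F1_coeff z (n - k) * (of_nat k - 2 * of_nat (n - k) + z))
    = z * hyp0F1_coeff z n"
proof -
  define B where "B = Abs_fps (hyp0F1_coeff z)"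
  define C where "C = Abs_fps (hyp0F1_coeff (-z))"
  define W where "W = fps_theta C * B - fps_const 1 * (C * fps_theta B) + fps_const z * (C * B)"
  have BC_nth: "(B * C) $ k = hyp0F1_product_coeff z k" if "k \<le> n" for k
  proof -
    have "(B * C) $ k = (\<Sum>i\<le>k. hyp0F1_coeff z i * hyp0F1_coeff (-z) (k - i))"
      by (simp add: B_def C_def fps_mult_nth atLeast0AtMost)
    also have "\<dots> = hyp0F1_product_coeff z k"
      by (metis hyp0F1_coeff_convolution pochhammer_neq_0_mono assms that)
    finally show ?thesis .
  qed
  have W_nth: "W $ m = (if m = 0 then z else 0)" if "m \<le> n" for m
    using hyp0F1_wronskian_coeff[of m z] pochhammer_neq_0_mono[OF assms(1)] pochhammer_neq_0_mono[OF assms(2)] that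
    unfolding W_def fps_theta_combination_nth
    by (cases "m = 0") (simp_all add: B_def C_def hyp0F1_coeff_def)
  have "fps_theta (B * C) * B - fps_const 2 * (B * C * fps_theta B) + fps_const z * (B * C * B) = B * W"
    by (simp add: W_def fps_theta_mult algebra_simps fps_numeral_fps_const[symmetric])
  then have "(\<Sum>k\<le>n. (B * C) $ k * B $ (n - k) * (of_nat k - 2 * of_nat (n - k) + z))
      = (B * W) $ n"
    unfolding fps_theta_combination_nth[symmetric] by simp
  also have "\<dots> = (\<Sum>i\<le>n. B $ i * W $ (n - i))"
    by (simp add: fps_mult_nth atLeast0AtMost)
  also have "\<dots> = (\<Sum>i\<le>n. if i = n then B $ n * z else 0)"
    using W_nth by (intro sum.cong) auto
  also have "\<dots> = B $ n * z"
    by simp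
  finally show ?thesis
    using BC_nth by (simp add: B_def mult.commute)
qed

lemma pochhammer_nonzero_if_prod_sq_diff_nonzero:
  fixes z :: "'a::field_char_0"
  assumes "\<forall>j\<in>{1..n}. of_nat j ^ 2 - z ^ 2 \<noteq> 0"
  shows "pochhammer (1 - z) n \<noteq> 0" "pochhammer (1 + z) n \<noteq> 0"
proof -
  have "(\<Prod>j=1..n. of_nat j ^ 2 - z ^ 2) \<noteq> 0"
    using assms by (subst prod_zero_iff) auto
  then show "pochhammer (1 - z) n \<noteq> 0" "pochhammer (1 + z) n \<noteq> 0"
    unfolding prod_sq_diff_eq_pochhammer by auto
qed

lemma hyp0F1_coeff_mult_prod:
  fixes z :: "'a::field_char_0"
  assumes "1 \<le> k" "k \<le> n" "pochhammer (1 - z) (n - 1) \<noteq> 0"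
  shows "hyp0F1_coeff z (n - 1) * (\<Prod>j=1..k-1. (of_nat j - of_nat n) * (of_nat j - of_nat n + z))
    = hyp0F1_coeff z (n - k)"
proof -
  have shift: "of_nat n - of_nat (k - 1) = (of_nat (n - k) + 1 :: 'a)"
    "of_nat n - z - of_nat (k - 1) = (of_nat (n - k) + 1 - z :: 'a)"
    using assms by (simp_all add: of_nat_diff)
  have exponent: "k - 1 = (n - 1) - (n - k)"
    using assms by simp
  have "hyp0F1_coeff z (n - 1) * (\<Prod>j=1..k-1. (of_nat j - of_nat n) * (of_nat j - of_nat n + z))
      = hyp0F1_coeff z (n - 1) * (pochhammer (of_nat (n - k) + 1) (k - 1)
          * pochhammer (of_nat (n - k) + 1 - z) (k - 1))"
    unfolding prod_pair_eq_pochhammer shift ..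
  also have "\<dots> = hyp0F1_coeff z (n - 1) * (pochhammer (of_nat (n - k) + 1) ((n - 1) - (n - k))
          * pochhammer (of_nat (n - k) + 1 - z) ((n - 1) - (n - k)))"
    by (simp only: exponent[symmetric])
  also have "\<dots> = hyp0F1_coeff z (n - k)"
    using assms by (intro hyp0F1_coeff_split) auto
  finally show ?thesis .
qed

lemma central_binomial_finite_sum:
  fixes z :: "'a::field_char_0"
  assumes "n \<ge> 1" and nonzero: "\<forall>j\<in>{1..n}. of_nat j ^ 2 - z ^ 2 \<noteq> 0"
  shows "(\<Sum>k=1..n. of_nat ((2 * k) choose k) * (3 * of_nat k - 2 * of_nat n + z) *
          ((\<Prod>j=1..k-1. (of_nat j - of_nat n) * (of_nat j - of_nat n + z)) /
           (\<Prod>j=1..k. of_nat j ^ 2 - z ^ 2)))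
    = 2 / (of_nat n - z)"
proof -
  note poch = pochhammer_nonzero_if_prod_sq_diff_nonzero[OF nonzero]
  have poch_pred: "pochhammer (1 - z) (n - 1) \<noteq> 0"
    using pochhammer_neq_0_mono[OF poch(1)] by simp
  then have "hyp0F1_coeff z (n - 1) \<noteq> 0"
    by (simp add: hyp0F1_coeff_def)
  have term_eq: "of_nat ((2 * k) choose k) * (3 * of_nat k - 2 * of_nat n + z) *
          ((\<Prod>j=1..k-1. (of_nat j - of_nat n) * (of_nat j - of_nat n + z)) /
           (\<Prod>j=1..k. of_nat j ^ 2 - z ^ 2))
      = hyp0F1_product_coeff z k * hyp0F1_coeff z (n - k) * (of_nat k - 2 * of_nat (n - k) + z)
        / hyp0F1_coeff z (n - 1)"
    if k: "k \<in> {1..n}" for k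
  proof -
    have prod_eq: "(\<Prod>j=1..k-1. (of_nat j - of_nat n) * (of_nat j - of_nat n + z))
        = hyp0F1_coeff z (n - k) / hyp0F1_coeff z (n - 1)"
      using hyp0F1_coeff_mult_prod[of k n z] k poch_pred \<open>hyp0F1_coeff z (n - 1) \<noteq> 0\<close>
      by (simp add: eq_divide_eq mult.commute)
    have diff_eq: "of_nat (n - k) = (of_nat n - of_nat k :: 'a)"
      using k by (simp add: of_nat_diff)
    show ?thesis
      unfolding prod_eq diff_eq hyp0F1_product_coeff_def prod_sq_diff_eq_pochhammer by (simp add: field_simps)
  qed
  have "(\<Sum>k=1..n. hyp0F1_product_coeff z k * hyp0F1_coeff z (n - k) * (of_nat k - 2 * of_nat (n - k) + z))
      = z * hyp0F1_coeff z n - hyp0F1_coeff z n * (z - 2 * of_nat n)"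
    using hyp0F1_product_identity[OF poch]
    by (simp add: atMost_atLeast0 sum.atLeast_Suc_atMost hyp0F1_product_coeff_def eq_diff_eq add.commute)
  also have "\<dots> = 2 * of_nat n * hyp0F1_coeff z n"
    by (simp add: algebra_simps)
  finally have sum_eq: "(\<Sum>k=1..n. hyp0F1_product_coeff z k * hyp0F1_coeff z (n - k)
      * (of_nat k - 2 * of_nat (n - k) + z)) = 2 * of_nat n * hyp0F1_coeff z n" .
  have rec: "hyp0F1_coeff z n * (of_nat n * (of_nat n - z)) = hyp0F1_coeff z (n - 1)"
    using hyp0F1_coeff_Suc[of z "n - 1"] poch(1) assms(1) by simp
  have "of_nat n - z \<noteq> 0"
    using nonzero assms(1) by (auto simp: power2_eq_square)
  moreover have "hyp0F1_coeff z n \<noteq> 0"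
    using rec \<open>hyp0F1_coeff z (n - 1) \<noteq> 0\<close> by auto
  ultimately have "2 * of_nat n * hyp0F1_coeff z n / (hyp0F1_coeff z n * (of_nat n * (of_nat n - z)))
      = 2 / (of_nat n - z)"
    using assms(1) by (simp add: field_simps)
  then show ?thesis
    unfolding rec sum_eq[symmetric] sum_divide_distrib using term_eq by simp
qed

section \<open>The series\<close>

(* For k >= n, tail_term n z k is the k-th term of the series (tail_term_eq). Its factor tail_factor
   vanishes for 1 <= k < n, so that every series can be summed from k = 1. Because of the truncated
   k - 1, tail_weight is meaningful only for k >= 1. *)
definition tail_factor :: "nat \<Rightarrow> 'a::comm_ring_1 \<Rightarrow> nat \<Rightarrow> 'a" where
  "tail_factor n z k = (\<Prod>i\<in>{1..<n}. (of_nat k - of_nat i) * (of_nat k - of_nat i + z))"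

definition tail_weight :: "'a::field_char_0 \<Rightarrow> nat \<Rightarrow> 'a" where
  "tail_weight z k = pochhammer (1 - z) (k - 1) * fact k / fact (2 * k)"

definition tail_term :: "nat \<Rightarrow> 'a::field_char_0 \<Rightarrow> nat \<Rightarrow> 'a" where
  "tail_term n z k = (3 * of_nat k - 2 * of_nat n + z) * tail_factor n z k * tail_weight z k * hyp0F1_coeff z (n - 1)"

lemma tail_factor_Suc:
  "n \<ge> 1 \<Longrightarrow> tail_factor (Suc n) z k = tail_factor n z k * ((of_nat k - of_nat n) * (of_nat k - of_nat n + z))"
  by (simp add: tail_factor_def prod.atLeastLessThan_Suc)

lemma tail_factor_Suc_Suc:
  assumes "n \<ge> 1"
  shows "tail_factor (Suc n) z (Suc k) = of_nat k * (of_nat k + z) * tail_factor n z k"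
  using assms
proof (induction n rule: nat_induct_at_least)
  case (Suc n)
  have "tail_factor (Suc (Suc n)) z (Suc k)
      = of_nat k * (of_nat k + z) * (tail_factor n z k * ((of_nat k - of_nat n) * (of_nat k - of_nat n + z)))"
    using Suc by (simp add: tail_factor_Suc algebra_simps)
  also have "\<dots> = of_nat k * (of_nat k + z) * tail_factor (Suc n) z k"
    using Suc by (simp add: tail_factor_Suc)
  finally show ?case .
qed (simp add: tail_factor_def)

lemma tail_factor_eq_0: "1 \<le> k \<Longrightarrow> k < n \<Longrightarrow> tail_factor n z k = 0"
  unfolding tail_factor_def by (rule prod_zero) (auto intro!: bexI[of _ k])

lemma tail_factor_Suc_eq_poly: "\<exists>p. \<forall>m. tail_factor n z (Suc m) = poly p (of_nat m)"
proof
  show "\<forall>m. tail_factor n z (Suc m) = poly (\<Prod>i\<in>{1..<n}. [:1 - of_nat i, 1:] * [:1 - of_nat i + z, 1:]) (of_nat m)"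
    by (simp add: tail_factor_def poly_prod algebra_simps)
qed

lemma tail_factor_mult_eq:
  fixes z :: "'a::{comm_ring_1,ring_char_0}"
  assumes "n \<ge> 1" "n \<le> k"
  shows "tail_factor n z k * (fact (k - n) * pochhammer (1 + z) (k - n))
    = fact (k - 1) * pochhammer (1 + z) (k - 1)"
proof -
  have "tail_factor n z k = (\<Prod>i=1..n - 1. of_nat k - of_nat i) * (\<Prod>i=1..n - 1. (of_nat k + z) - of_nat i)"
    unfolding tail_factor_def prod.distrib[symmetric] using assms(1)
    by (intro prod.cong) (auto simp: algebra_simps)
  also have "\<dots> = pochhammer (of_nat (k - n) + 1) (n - 1) * pochhammer (1 + z + of_nat (k - n)) (n - 1)"
  proof -
    have shift: "of_nat k - of_nat (n - 1) = (of_nat (k - n) + 1 :: 'a)"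
      "of_nat k + z - of_nat (n - 1) = 1 + z + of_nat (k - n)"
      using assms by (simp_all add: of_nat_diff)
    show ?thesis
      unfolding prod_diff_eq_pochhammer shift ..
  qed
  finally have factor: "tail_factor n z k = \<dots>" .
  have le: "k - n \<le> k - 1" and diff: "k - 1 - (k - n) = n - 1"
    using assms by simp_all
  have "fact (k - 1) = fact (k - n) * (pochhammer (of_nat (k - n) + 1) (n - 1) :: 'a)"
    using pochhammer_product[OF le, of 1] unfolding diff by (simp add: pochhammer_fact add.commute del: of_nat_diff)
  moreover have "pochhammer (1 + z) (k - 1) = pochhammer (1 + z) (k - n) * pochhammer (1 + z + of_nat (k - n)) (n - 1)"
    using pochhammer_product[OF le, of "1 + z"] unfolding diff .
  ultimately show ?thesis
    unfolding factor by (simp add: algebra_simps)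
qed

lemma tail_weight_Suc:
  assumes "m \<ge> 1"
  shows "2 * (2 * of_nat m + 1) * tail_weight z (Suc m) = (of_nat m - z) * tail_weight z m"
proof -
  have poch: "pochhammer (1 - z) m = pochhammer (1 - z) (m - 1) * (of_nat m - z)"
    using assms pochhammer_Suc[of "1 - z" "m - 1"] by (simp add: of_nat_diff algebra_simps)
  have fact_Suc: "fact (Suc m) = (of_nat m + 1) * (fact m :: 'a)"
    by simp
  have fact_double: "fact (2 * Suc m) = 2 * (of_nat m + 1) * (2 * of_nat m + 1) * (fact (2 * m) :: 'a)"
    by (simp add: algebra_simps)
  have cancel: "2 * b * (p * x * (a * f) / (2 * a * b * e)) = x * (p * f / e)"
    if "a \<noteq> 0" "b \<noteq> 0" for a b p x f e :: 'a
    using that by (simp add: field_simps)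
  have "(of_nat m + 1 :: 'a) \<noteq> 0" "(2 * of_nat m + 1 :: 'a) \<noteq> 0"
    using of_nat_neq_0[of m] of_nat_neq_0[of "2 * m"] by (simp_all add: add.commute)
  then show ?thesis
    unfolding tail_weight_def diff_Suc_1 poch fact_Suc fact_double by (rule cancel)
qed

lemma tail_weight_shift:
  assumes "m \<ge> 1"
  shows "(of_nat m - z) * tail_weight z m = (1 - z) * tail_weight (z - 1) m"
proof -
  obtain m' where m': "m = Suc m'"
    using assms by (cases m) auto
  have "(of_nat m - z) * pochhammer (1 - z) m' = pochhammer (1 - z) m"
    unfolding m' by (simp add: pochhammer_Suc algebra_simps)
  also have "\<dots> = (1 - z) * pochhammer (1 - (z - 1)) m'"
    unfolding m' pochhammer_rec by (simp add: algebra_simps)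
  finally show ?thesis
    unfolding tail_weight_def m' by (simp add: mult.assoc[symmetric])
qed

lemma tail_term_Suc_diff:
  assumes "n \<ge> 1" "pochhammer (1 - z) n \<noteq> 0"
  shows "tail_term (Suc n) z k - tail_term n z k = tail_weight z k * hyp0F1_coeff z n *
    (2 * (2 * of_nat k - 1) * tail_factor (Suc n) z k - (of_nat k - z) * tail_factor (Suc n) z (Suc k))"
proof -
  have "hyp0F1_coeff z (Suc (n - 1)) * (of_nat (Suc (n - 1)) * (of_nat (Suc (n - 1)) - z)) = hyp0F1_coeff z (n - 1)"
    using assms by (intro hyp0F1_coeff_Suc) simp
  then have rec: "hyp0F1_coeff z (n - 1) = of_nat n * (of_nat n - z) * hyp0F1_coeff z n"
    using assms(1) by (simp add: mult.commute)
  show ?thesis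
    unfolding tail_term_def tail_factor_Suc_Suc[OF assms(1)] tail_factor_Suc[OF assms(1), of z k] rec diff_Suc_1
    by (simp add: algebra_simps)
qed

lemma sum_tail_term_Suc_diff:
  assumes "n \<ge> 1" "pochhammer (1 - z) n \<noteq> 0"
  shows "(\<Sum>k<m. tail_term (Suc n) z (Suc k) - tail_term n z (Suc k))
    = - (of_nat m - z) * tail_factor (Suc n) z (Suc m) * tail_weight z m * hyp0F1_coeff z n"
proof (induction m)
  case 0
  show ?case
    using assms(1) by (simp add: tail_factor_eq_0)
next
  case (Suc m)
  have key: "2 * (2 * of_nat (Suc m) - 1) * tail_weight z (Suc m) * tail_factor (Suc n) z (Suc m)
      = (of_nat m - z) * tail_weight z m * tail_factor (Suc n) z (Suc m)"
  proof (cases "m = 0")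
    case True
    (* tail_weight_Suc fails at m = 0, but there tail_factor vanishes *)
    then show ?thesis
      using assms(1) by (simp add: tail_factor_eq_0)
  next
    case False
    have "2 * (2 * of_nat (Suc m) - 1) = (2 * (2 * of_nat m + 1) :: 'a)"
      by simp
    then show ?thesis
      using False by (simp only: tail_weight_Suc)
  qed
  have "(\<Sum>k<Suc m. tail_term (Suc n) z (Suc k) - tail_term n z (Suc k))
      = - (of_nat m - z) * tail_factor (Suc n) z (Suc m) * tail_weight z m * hyp0F1_coeff z n
        + tail_weight z (Suc m) * hyp0F1_coeff z n * (2 * (2 * of_nat (Suc m) - 1) * tail_factor (Suc n) z (Suc m)
          - (of_nat (Suc m) - z) * tail_factor (Suc n) z (Suc (Suc m)))"
    by (simp only: sum.lessThan_Suc Suc.IH tail_term_Suc_diff[OF assms, of "Suc m"])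
  also have "\<dots> = - (of_nat (Suc m) - z) * tail_factor (Suc n) z (Suc (Suc m)) * tail_weight z (Suc m) * hyp0F1_coeff z n"
    using key by algebra
  finally show ?case .
qed

lemma sum_tail_term_one:
  assumes "m \<ge> 1"
  shows "(\<Sum>k<m. tail_term 1 z (Suc k)) = 1 - (of_nat m - z) * tail_weight z m"
  using assms
proof (induction m rule: nat_induct_at_least)
  case base
  show ?case
    by (simp add: tail_term_def tail_factor_def tail_weight_def hyp0F1_coeff_def field_simps)
next
  case (Suc m)
  have "(\<Sum>k<Suc m. tail_term 1 z (Suc k))
      = 1 - (of_nat m - z) * tail_weight z m + (3 * (of_nat m + 1) - 2 + z) * tail_weight z (Suc m)"
    unfolding sum.lessThan_Suc Suc.IH by (simp add: tail_term_def tail_factor_def hyp0F1_coeff_def)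
  also have "\<dots> = 1 - (of_nat m + 1 - z) * tail_weight z (Suc m)"
    using tail_weight_Suc[OF Suc.hyps, of z] by algebra
  finally show ?case
    by simp
qed

lemma tail_weight_tendsto_0:
  fixes z :: "'a::{real_normed_field,banach}"
  shows "(\<lambda>m. tail_weight z m) \<longlonglongrightarrow> 0"
proof -
  define N where "N = Suc (nat \<lceil>norm z\<rceil>)"
  have ratio: "norm (tail_weight z (Suc m)) \<le> 1 / 2 * norm (tail_weight z m)" if "m \<ge> N" for m
  proof -
    have m: "m \<ge> 1" "norm z \<le> real m"
      using that unfolding N_def by linarith+
    have rec: "of_nat (2 * (2 * m + 1)) * tail_weight z (Suc m) = (of_nat m - z) * tail_weight z m"
      using tail_weight_Suc[OF m(1), of z] by (simp add: algebra_simps)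
    have "(of_nat (2 * (2 * m + 1)) :: 'a) \<noteq> 0"
      by (simp only: of_nat_eq_0_iff) simp
    then have step: "tail_weight z (Suc m) = (of_nat m - z) * tail_weight z m / of_nat (2 * (2 * m + 1))"
      by (metis rec nonzero_mult_div_cancel_left)
    have "norm (tail_weight z (Suc m)) = norm (of_nat m - z) * norm (tail_weight z m) / real (2 * (2 * m + 1))"
      unfolding step norm_divide norm_mult norm_of_nat ..
    also have "\<dots> \<le> (2 * real m + 1) * norm (tail_weight z m) / real (2 * (2 * m + 1))"
      using norm_triangle_ineq4[of "of_nat m :: 'a" z] m(2)
      by (intro divide_right_mono mult_right_mono) auto
    also have "\<dots> = 1 / 2 * norm (tail_weight z m)"
      by (simp add: field_simps)
    finally show ?thesis .
  qed
  have "summable (\<lambda>m. tail_weight z m)"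
    by (rule summable_ratio_test[of "1/2" N]) (use ratio in auto)
  then show ?thesis
    by (rule summable_LIMSEQ_zero)
qed

lemma poly_times_tail_weight_tendsto_0:
  fixes w :: "'a::{real_normed_field,banach}"
  shows "(\<lambda>m. poly p (of_nat m) * tail_weight w m) \<longlonglongrightarrow> 0"
proof (induction p arbitrary: w)
  case (pCons a p)
  have "(\<lambda>m. a * tail_weight w m + ((1 - w) * (poly p (of_nat m) * tail_weight (w - 1) m)
      + w * (poly p (of_nat m) * tail_weight w m))) \<longlonglongrightarrow> 0"
    by (intro tendsto_add_zero tendsto_mult_right_zero tail_weight_tendsto_0 pCons.IH)
  moreover have "\<forall>\<^sub>F m in sequentially. a * tail_weight w m + ((1 - w) * (poly p (of_nat m) * tail_weight (w - 1) m)
      + w * (poly p (of_nat m) * tail_weight w m)) = poly (pCons a p) (of_nat m) * tail_weight w m"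
  proof (rule eventually_sequentiallyI[of 1])
    fix m :: nat
    assume "m \<ge> 1"
    then have "(1 - w) * tail_weight (w - 1) m = (of_nat m - w) * tail_weight w m"
      by (simp add: tail_weight_shift)
    moreover have "poly (pCons a p) (of_nat m) = a + of_nat m * poly p (of_nat m)"
      by simp
    ultimately show "a * tail_weight w m + ((1 - w) * (poly p (of_nat m) * tail_weight (w - 1) m)
        + w * (poly p (of_nat m) * tail_weight w m)) = poly (pCons a p) (of_nat m) * tail_weight w m"
      by algebra
  qed
  ultimately show ?case
    by (rule Lim_transform_eventually)
qed simp

lemma tail_term_sums:
  fixes z :: "'a::{real_normed_field,banach}"
  assumes "n \<ge> 1" "pochhammer (1 - z) (n - 1) \<noteq> 0"
  shows "(\<lambda>k. tail_term n z (Suc k)) sums 1"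
  using assms
proof (induction n rule: nat_induct_at_least)
  case base
  have "(\<lambda>m. 1 - poly [:-z, 1:] (of_nat m) * tail_weight z m) \<longlonglongrightarrow> 1 - 0"
    by (intro tendsto_diff tendsto_const poly_times_tail_weight_tendsto_0)
  moreover have "\<forall>\<^sub>F m in sequentially. 1 - poly [:-z, 1:] (of_nat m) * tail_weight z m = (\<Sum>k<m. tail_term 1 z (Suc k))"
  proof (rule eventually_sequentiallyI[of 1])
    fix m :: nat
    assume "m \<ge> 1"
    then show "1 - poly [:-z, 1:] (of_nat m) * tail_weight z m = (\<Sum>k<m. tail_term 1 z (Suc k))"
      unfolding sum_tail_term_one[OF \<open>m \<ge> 1\<close>] by simp
  qed
  ultimately show ?case
    unfolding sums_def by (simp add: Lim_transform_eventually)
next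
  case (Suc n)
  have poch: "pochhammer (1 - z) n \<noteq> 0"
    using Suc.prems by simp
  then have "(\<lambda>k. tail_term n z (Suc k)) sums 1"
    by (intro Suc.IH pochhammer_neq_0_mono[OF poch]) simp
  moreover have "(\<lambda>k. tail_term (Suc n) z (Suc k) - tail_term n z (Suc k)) sums 0"
  proof -
    obtain p where p: "\<And>m. tail_factor (Suc n) z (Suc m) = poly p (of_nat m)"
      using tail_factor_Suc_eq_poly by blast
    have "(\<lambda>m. - hyp0F1_coeff z n * (poly ([:-z, 1:] * p) (of_nat m) * tail_weight z m)) \<longlonglongrightarrow> 0"
      by (intro tendsto_mult_right_zero poly_times_tail_weight_tendsto_0)
    then show ?thesis
      unfolding sums_def sum_tail_term_Suc_diff[OF Suc.hyps poch] p by (simp add: algebra_simps)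
  qed
  ultimately show ?case
    using sums_add by fastforce
qed

lemma tail_term_eq:
  fixes z :: "'a::field_char_0"
  assumes "n \<ge> 1" "n \<le> k"
    and nonzero: "(\<Prod>j\<in>{1..k}-{n}. (of_nat j - of_nat n) * (of_nat j - of_nat n + z)) \<noteq> 0"
  shows "(3 * of_nat k - 2 * of_nat n + z) / (of_nat k * of_nat ((2 * k) choose k)) *
      ((\<Prod>j=1..k-1. of_nat j ^ 2 - z ^ 2) / (\<Prod>j\<in>{1..k}-{n}. (of_nat j - of_nat n) * (of_nat j - of_nat n + z)))
    = tail_term n z k"
proof -
  define F :: 'a where "F = fact (n - 1) * pochhammer (1 - z) (n - 1)"
  define R :: 'a where "R = fact (k - n) * pochhammer (1 + z) (k - n)"
  have "F \<noteq> 0" "R \<noteq> 0"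
    using nonzero unfolding prod_pair_remove_eq_pochhammer[OF assms(1,2)] F_def R_def by auto
  have poch_plus: "pochhammer (1 + z) (k - 1) = tail_factor n z k * R / fact (k - 1)"
    using tail_factor_mult_eq[OF assms(1,2), of z] unfolding R_def by (simp add: field_simps)
  have binom: "(of_nat ((2 * k) choose k) :: 'a) = fact (2 * k) / (fact k * fact k)"
    by (simp add: binomial_fact mult_2)
  have fact_k: "(fact k :: 'a) = of_nat k * fact (k - 1)"
    using assms by (simp add: fact_reduce)
  have "(of_nat k :: 'a) \<noteq> 0"
    using assms by simp
  then show ?thesis
    using \<open>F \<noteq> 0\<close> \<open>R \<noteq> 0\<close>
    unfolding tail_term_def tail_weight_def hyp0F1_coeff_def prod_sq_diff_eq_pochhammer poch_plus
      prod_pair_remove_eq_pochhammer[OF assms(1,2)] F_def[symmetric] R_def[symmetric] binom fact_k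
    by (simp add: field_simps)
qed

lemma central_binomial_series:
  fixes z :: "'a::{real_normed_field,banach}"
  assumes "n \<ge> 1" and nonzero: "\<forall>j. j \<ge> 1 \<and> j \<noteq> n \<longrightarrow> of_nat j - of_nat n + z \<noteq> 0"
  shows "(\<lambda>i. let k = i + n in
      (3 * of_nat k - 2 * of_nat n + z) / (of_nat k * of_nat ((2 * k) choose k)) *
      ((\<Prod>j=1..k-1. of_nat j ^ 2 - z ^ 2) /
       (\<Prod>j\<in>{1..k}-{n}. (of_nat j - of_nat n) * (of_nat j - of_nat n + z))))
    sums 1"
proof -
  have den_nonzero: "(\<Prod>j\<in>{1..k}-{n}. (of_nat j - of_nat n) * (of_nat j - of_nat n + z)) \<noteq> 0" for k
    using nonzero by (subst prod_zero_iff) auto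
  have "pochhammer (1 - z) (n - 1) \<noteq> 0"
    using den_nonzero[of n] unfolding prod_pair_remove_eq_pochhammer[OF assms(1) order_refl] by simp
  then have "(\<lambda>k. tail_term n z (Suc k)) sums 1"
    using assms(1) by (intro tail_term_sums)
  then have "(\<lambda>i. tail_term n z (Suc (i + (n - 1)))) sums 1"
    by (subst sums_zero_iff_shift) (auto simp: tail_term_def tail_factor_eq_0)
  moreover have "tail_term n z (Suc (i + (n - 1))) = (let k = i + n in
      (3 * of_nat k - 2 * of_nat n + z) / (of_nat k * of_nat ((2 * k) choose k)) *
      ((\<Prod>j=1..k-1. of_nat j ^ 2 - z ^ 2) /
       (\<Prod>j\<in>{1..k}-{n}. (of_nat j - of_nat n) * (of_nat j - of_nat n + z))))" for i
    using assms(1) tail_term_eq[OF assms(1) _ den_nonzero, of "i + n"] by (simp add: Let_def)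
  ultimately show ?thesis
    by simp
qed

theorem mainTheorem2:
  fixes n :: nat and z :: complex
  assumes "n \<ge> 1"
  shows
   "((\<forall>j\<in>{1..n}. (of_nat j)^2 - z^2 \<noteq> 0) \<and> of_nat n - z \<noteq> 0 \<longrightarrow>
      (\<Sum>k=1..n. of_nat ((2*k) choose k) * (3 * of_nat k - 2 * of_nat n + z) *
          ((\<Prod>j=1..k-1. (of_nat j - of_nat n) * (of_nat j - of_nat n + z)) /
           (\<Prod>j=1..k. (of_nat j)^2 - z^2)))
      = 2 / (of_nat n - z))
    \<and>
    ((\<forall>j. j \<ge> 1 \<and> j \<noteq> n \<longrightarrow> of_nat j - of_nat n + z \<noteq> 0) \<longrightarrow>
      (\<lambda>i. let k = i + n in
          (3 * of_nat k - 2 * of_nat n + z) / (of_nat k * of_nat ((2*k) choose k)) *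
          ((\<Prod>j=1..k-1. (of_nat j)^2 - z^2) /
           (\<Prod>j\<in>{1..k}-{n}. (of_nat j - of_nat n) * (of_nat j - of_nat n + z))))
      sums 1)"
  using central_binomial_finite_sum[OF assms, of z] central_binomial_series[OF assms, of z] by blast

end
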